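(* Let $K$ be a non-Archimedean local field with normalized absolute value $|\cdot|_K$, residue field of cardinality $q$, and let $\alpha>0$. For a radial function $x\mapsto u(|x|_K)$ on $K$ define $$(I^\alpha u)(x)=\frac{1-q^{-\alpha}}{1-q^{\alpha-1}}\int_{|y|_K\le|x|_K}\big(|x-y|_K^{\alpha-1}-|y|_K^{\alpha-1}\big)u(|y|_K)\,dy\quad(\alpha\neq1),$$ $$(I^1 u)(x)=\frac{1-q}{q\log q}\int_{|y|_K\le|x|_K}\big(\log|x-y|_K-\log|y|_K\big)u(|y|_K)\,dy .$$ Suppose that for some $m\in\mathbb Z$, $\sum_{k=-\infty}^m\max(q^k,q^{\alpha k})|u(q^k)|<\infty$ if $\alpha\ne1$, and $\sum_{k=-\infty}^m|k|q^k|u(q^k)|<\infty$ if $\alpha=1$. Then $I^\alpha u$ exists, it is a radial function, and for every $x\neq0$, $$(I^\alpha u)(|x|_K)=q^{-\alpha}|x|_K^\alpha u(|x|_K)+\frac{1-q^{-\alpha}}{1-q^{\alpha-1}}\int_{|y|_K<|x|_K}\big(|x|_K^{\alpha-1}-|y|_K^{\alpha-1}\big)u(|y|_K)\,dy\quad(\alpha\ne1),$$ $$(I^1u)(|x|_K)=q^{-1}|x|_K u(|x|_K)+\frac{1-q}{q\log q}\int_{|y|_K<|x|_K}\big(\log|x|_K-\log|y|_K\big)u(|y|_K)\,dy .$$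
   Context: $K$ is a non-discrete totally disconnected locally compact field; its absolute value $|\cdot|_K$ is normalized so that its nonzero values are $q^N$, $N\in\mathbb Z$, where $q$ is the cardinality of the residue field $O/P$ ($O=\{|x|_K\le1\}$, $P=\{|x|_K<1\}$). $dx$ is the additive Haar measure on $K$ with the measure of $O$ equal to $1$. A radial function is one of the form $x\mapsto u(|x|_K)$. *)

theory Defs
  imports "HOL-Analysis.Analysis"
begin

text \<open>A non-Archimedean local field is modelled by a field type 'a together with
 an absolute value absK, a measure M (the additive Haar measure) and the integer q
 (the cardinality of the residue field O/P).\<close>

definition ring_of_integers :: "('a \<Rightarrow> real) \<Rightarrow> 'a set" where
  "ring_of_integers absK = {x. absK x \<le> 1}"

definition max_ideal :: "('a \<Rightarrow> real) \<Rightarrow> 'a set" where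
  "max_ideal absK = {x. absK x < 1}"

definition residue_field :: "('a::ab_group_add \<Rightarrow> real) \<Rightarrow> 'a set set" where
  "residue_field absK = (\<lambda>x. (\<lambda>p. x + p) ` max_ideal absK) ` ring_of_integers absK"

definition absK_topology :: "('a::ab_group_add \<Rightarrow> real) \<Rightarrow> 'a topology" where
  "absK_topology absK = Metric_space.mtopology UNIV (\<lambda>x y. absK (x - y))"

definition nonarch_local_field :: "('a::field \<Rightarrow> real) \<Rightarrow> 'a measure \<Rightarrow> nat \<Rightarrow> bool" where
  "nonarch_local_field absK M q \<longleftrightarrow>
     \<comment> \<open>non-Archimedean absolute value\<close>
     (\<forall>x. absK x \<ge> 0) \<and> (\<forall>x. absK x = 0 \<longleftrightarrow> x = 0) \<and>
     (\<forall>x y. absK (x * y) = absK x * absK y) \<and>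
     (\<forall>x y. absK (x + y) \<le> max (absK x) (absK y)) \<and>
     \<comment> \<open>finite residue field of cardinality q\<close>
     finite (residue_field absK) \<and> q = card (residue_field absK) \<and>
     \<comment> \<open>normalization: the nonzero values are exactly q^N, N in Z (hence non-discrete)\<close>
     absK ` (UNIV - {0}) = range (\<lambda>N::int. real q powi N) \<and>
     \<comment> \<open>locally compact and totally disconnected for the induced topology\<close>
     locally_compact_space (absK_topology absK) \<and>
     (\<forall>S. connectedin (absK_topology absK) S \<longrightarrow> (\<exists>a. S \<subseteq> {a})) \<and>
     \<comment> \<open>additive Haar measure on the Borel sets, normalized by mu(O) = 1\<close>
     space M = UNIV \<and> sets M = sigma_sets UNIV (Collect (openin (absK_topology absK))) \<and>
     (\<forall>a A. A \<in> sets M \<longrightarrow> emeasure M ((\<lambda>y. a + y) ` A) = emeasure M A) \<and>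
     emeasure M (ring_of_integers absK) = 1"

definition riesz_kernel :: "('a::field \<Rightarrow> real) \<Rightarrow> real \<Rightarrow> (real \<Rightarrow> real) \<Rightarrow> 'a \<Rightarrow> 'a \<Rightarrow> real" where
  "riesz_kernel absK \<alpha> u x y =
     (if \<alpha> \<noteq> 1 then (absK (x - y) powr (\<alpha> - 1) - absK y powr (\<alpha> - 1)) * u (absK y)
      else (ln (absK (x - y)) - ln (absK y)) * u (absK y))"

definition riesz_const :: "nat \<Rightarrow> real \<Rightarrow> real" where
  "riesz_const q \<alpha> =
     (if \<alpha> \<noteq> 1 then (1 - real q powr (-\<alpha>)) / (1 - real q powr (\<alpha> - 1))
      else (1 - real q) / (real q * ln (real q)))"

definition riesz_pot :: "('a::field \<Rightarrow> real) \<Rightarrow> 'a measure \<Rightarrow> nat \<Rightarrow> real \<Rightarrow> (real \<Rightarrow> real) \<Rightarrow> 'a \<Rightarrow> real" where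
  "riesz_pot absK M q \<alpha> u x =
     riesz_const q \<alpha> * (LINT y : {y. absK y \<le> absK x} | M. riesz_kernel absK \<alpha> u x y)"

end

theory Submission
  imports Defs
begin

text \<open>Let \<open>\<phi>(t) = t powr (\<alpha> - 1)\<close>, or \<open>\<phi> = ln\<close> when \<open>\<alpha> = 1\<close>, and fix \<open>x \<noteq> 0\<close>. By the
  ultrametric inequality \<open>|x - y| = |x|\<close> on the open ball \<open>|y| < |x|\<close>, which gives the integral
  in the formula. On the sphere \<open>|y| = |x|\<close> the kernel vanishes unless \<open>|y - x| < |x|\<close>, and
  there \<open>u(|y|) = u(|x|)\<close>; so the sphere contributes \<open>u(|x|)\<close> times the integral of
  \<open>\<phi>(|z|) - \<phi>(|x|)\<close> over the ball \<open>|z| < |x|\<close>. That ball is a union of spheres \<open>|z| = q^k\<close>,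
  of Haar measure \<open>q^k (1 - 1/q)\<close> because the ball of radius \<open>q^k\<close> consists of \<open>q\<close> translates
  of the ball of radius \<open>q^(k-1)\<close> (one for each residue class). The resulting series are
  geometric, and after multiplication by the normalising constant they sum to \<open>q^(-\<alpha>) |x|^\<alpha>\<close>.
  The summability hypotheses on \<open>u\<close> make all series absolutely convergent, so every integral
  exists.\<close>

lemma power_int_less_iff:
  fixes a :: "'a::linordered_field"
  assumes "1 < a"
  shows "a powi i < a powi j \<longleftrightarrow> i < j"
  using assms power_int_strict_increasing[of i j a] power_int_increasing[of j i a]
  by (cases "i < j") auto

lemma power_int_le_iff:
  fixes a :: "'a::linordered_field"
  assumes "1 < a"
  shows "a powi i \<le> a powi j \<longleftrightarrow> i \<le> j"
  using assms power_int_less_iff[of a j i] by (simp add: not_less[symmetric])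

lemma integral_countable_step_function:
  fixes M :: "'a measure" and A :: "nat \<Rightarrow> 'a set" and c :: "nat \<Rightarrow> real" and f :: "'a \<Rightarrow> real"
  assumes disj: "disjoint_family A" and fm: "\<And>i. A i \<in> fmeasurable M"
    and summ: "summable (\<lambda>i. \<bar>c i\<bar> * measure M (A i))"
    and on_A: "\<And>i y. y \<in> A i \<Longrightarrow> f y = c i"
    and outside: "\<And>y. (\<And>i. y \<notin> A i) \<Longrightarrow> f y = 0"
  shows "integrable M f \<and> integral\<^sup>L M f = (\<Sum>i. c i * measure M (A i))"
proof -
  define g where "g i y = indicator (A i) y * c i" for i y
  have g_single: "(\<lambda>i. g i y) = (\<lambda>i. if i = j then c j else 0)" if "y \<in> A j" for y j
    using that disj by (auto simp: g_def disjoint_family_on_def fun_eq_iff indicator_def)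
  have f_eq: "f = (\<lambda>y. \<Sum>i. g i y)"
  proof
    fix y
    show "f y = (\<Sum>i. g i y)"
    proof (cases "\<exists>j. y \<in> A j")
      case True
      then obtain j where j: "y \<in> A j" by blast
      show ?thesis using sums_single[of j "\<lambda>_. c j"] on_A[OF j] by (simp add: g_single[OF j] sums_iff)
    next
      case False
      then show ?thesis using outside by (auto simp: g_def)
    qed
  qed
  have sets_A: "A i \<inter> space M = A i" for i
    using fm[of i] by (auto dest: sets.sets_into_space)
  have int: "integrable M (g i)" for i
    unfolding g_def using fm[of i]
    by (intro integrable_mult_left integrable_real_indicator) (auto simp: fmeasurable_def)
  have summable_norm: "summable (\<lambda>i. norm (g i y))" for y
  proof (cases "\<exists>j. y \<in> A j")
    case True
    then obtain j where j: "y \<in> A j" by blast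
    have "(\<lambda>i. norm (g i y)) = (\<lambda>i. if i = j then \<bar>c j\<bar> else 0)"
      using g_single[OF j] by (metis (mono_tags, lifting) norm_zero real_norm_def)
    then show ?thesis using sums_single[of j "\<lambda>_. \<bar>c j\<bar>"] by (simp add: sums_iff)
  next
    case False
    then show ?thesis by (auto simp: g_def)
  qed
  have "(\<lambda>y. norm (g i y)) = (\<lambda>y. indicator (A i) y * \<bar>c i\<bar>)" for i
    by (auto simp: g_def indicator_def abs_mult)
  then have "summable (\<lambda>i. \<integral>y. norm (g i y) \<partial>M)"
    using summ sets_A by (simp add: mult.commute)
  moreover have "integral\<^sup>L M (g i) = c i * measure M (A i)" for i
    unfolding g_def using sets_A by simp
  ultimately show ?thesis unfolding f_eq
    using integrable_suminf[of M g, OF int] integral_suminf[of M g, OF int] summable_norm by simp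
qed

lemma summable_reindex_downward:
  fixes h :: "int \<Rightarrow> real"
  assumes summable: "h summable_on {..m}" and nonneg: "\<And>k. h k \<ge> 0"
  shows "summable (\<lambda>i::nat. h (p - int i))"
proof -
  have "h summable_on ({..m} \<union> {m<..p})"
    by (intro summable_on_Un_disjoint summable summable_on_finite) auto
  then have "h summable_on {..p}" by (rule summable_on_subset_banach) auto
  moreover have "bij_betw (\<lambda>i::nat. p - int i) UNIV {..p}"
    by (rule bij_betw_byWitness[where f' = "\<lambda>k. nat (p - k)"]) auto
  ultimately have "(\<lambda>i. h (p - int i)) summable_on UNIV"
    using summable_on_reindex_bij_betw by blast
  then show ?thesis using summable_on_UNIV_nonneg_real_iff[of "\<lambda>i. h (p - int i)"] nonneg by simp
qed

lemma summable_downward_by_comparison: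
  fixes h F :: "int \<Rightarrow> real"
  assumes summable: "h summable_on {..m}" and nonneg: "\<And>k. h k \<ge> 0"
    and bound: "\<And>k. k \<le> p \<Longrightarrow> norm (F k) \<le> C * h k"
  shows "summable (\<lambda>i::nat. F (n - int i))"
proof -
  define p' where "p' = min n p"
  have "summable (\<lambda>i::nat. F (p' - int i))"
  proof (rule summable_comparison_test)
    show "summable (\<lambda>i. C * h (p' - int i))"
      by (intro summable_mult summable_reindex_downward[OF summable nonneg])
  qed (use bound in \<open>auto simp: p'_def\<close>)
  moreover have "n - int (i + nat (n - p')) = p' - int i" for i
    by (simp add: p'_def)
  ultimately have "summable (\<lambda>i. F (n - int (i + nat (n - p'))))" by presburger
  then show ?thesis by (rule summable_iff_shift[THEN iffD1])
qed

lemma power_int_diff_Suc: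
  fixes Q :: real
  assumes "Q > 0"
  shows "Q powi (n - 1 - int i) = Q powi n * (1 / Q) ^ Suc i"
proof -
  have "Q powi (n - 1 - int i) = Q powi (n - int (Suc i))"
    by (simp add: algebra_simps)
  also have "\<dots> = Q powi n / Q powi int (Suc i)"
    using assms by (intro power_int_diff) simp
  also have "\<dots> = Q powi n * (1 / Q) ^ Suc i"
    by (simp only: power_int_of_nat) (simp add: power_one_over)
  finally show ?thesis .
qed

lemma geometric_sums_Suc: "\<bar>z::real\<bar> < 1 \<Longrightarrow> (\<lambda>i. z ^ Suc i) sums (z / (1 - z))"
  using sums_mult[OF geometric_sums, of z z] by simp

lemma powr_moment_eq:
  fixes Q X \<alpha> :: real
  assumes "Q > 0" and "X > 0"
  shows "((X * (1/Q) ^ k) powr (\<alpha> - 1) - X powr (\<alpha> - 1)) * (X * (1/Q) ^ k)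
    = X powr \<alpha> * ((Q powr (-\<alpha>)) ^ k - (1/Q) ^ k)"
proof -
  have t: "X * (1/Q) ^ k > 0" using assms by simp
  have "(X * (1/Q) ^ k) powr (\<alpha> - 1) * (X * (1/Q) ^ k) = (X * (1/Q) ^ k) powr \<alpha>"
    using powr_mult_base[OF less_imp_le[OF t], of "\<alpha> - 1"] by (simp add: mult.commute)
  also have "\<dots> = X powr \<alpha> * ((1/Q) powr \<alpha>) ^ k"
    using assms by (simp add: powr_mult powr_realpow[symmetric] powr_powr powr_power mult.commute)
  also have "(1/Q) powr \<alpha> = Q powr (-\<alpha>)"
    using assms by (simp add: powr_divide powr_minus_divide)
  finally have first: "(X * (1/Q) ^ k) powr (\<alpha> - 1) * (X * (1/Q) ^ k) = X powr \<alpha> * (Q powr (-\<alpha>)) ^ k" .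
  have "X powr (\<alpha> - 1) * X = X powr \<alpha>"
    using powr_mult_base[of X "\<alpha> - 1"] assms by (simp add: mult.commute)
  then have "X powr (\<alpha> - 1) * (X * (1/Q) ^ k) = X powr \<alpha> * (1/Q) ^ k"
    by (metis mult.assoc)
  with first show ?thesis by (simp add: left_diff_distrib right_diff_distrib)
qed

lemma summable_powr_moment_series:
  fixes Q X \<alpha> :: real
  assumes Q: "Q > 1" and X: "X > 0" and \<alpha>: "\<alpha> > 0"
  defines "t \<equiv> \<lambda>i::nat. X * (1/Q) ^ Suc i"
  shows "summable (\<lambda>i. \<bar>t i powr (\<alpha> - 1) - X powr (\<alpha> - 1)\<bar> * t i)"
proof (rule summable_comparison_test)
  define a where "a = Q powr (-\<alpha>)"
  define r where "r = 1 / Q"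
  have a: "0 < a" "a < 1" unfolding a_def using Q \<alpha> by (auto simp: powr_less_one)
  have r: "0 < r" "r < 1" unfolding r_def using Q by auto
  have moment: "(t i powr (\<alpha> - 1) - X powr (\<alpha> - 1)) * t i = X powr \<alpha> * (a ^ Suc i - r ^ Suc i)" for i
    unfolding t_def a_def r_def using Q X by (intro powr_moment_eq) auto
  show "summable (\<lambda>i. X powr \<alpha> * (a ^ Suc i + r ^ Suc i))"
    using a r by (intro summable_mult summable_add summable_ignore_initial_segment[of _ 1]
        summable_geometric) simp_all
  have bound: "\<bar>t i powr (\<alpha> - 1) - X powr (\<alpha> - 1)\<bar> * t i \<le> X powr \<alpha> * (a ^ Suc i + r ^ Suc i)" for i
  proof -
    have "\<bar>t i powr (\<alpha> - 1) - X powr (\<alpha> - 1)\<bar> * t i = \<bar>(t i powr (\<alpha> - 1) - X powr (\<alpha> - 1)) * t i\<bar>"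
      using Q X by (simp add: abs_mult t_def)
    also have "\<dots> = X powr \<alpha> * \<bar>a ^ Suc i - r ^ Suc i\<bar>"
      unfolding moment by (simp add: abs_mult)
    also have "\<dots> \<le> X powr \<alpha> * (a ^ Suc i + r ^ Suc i)"
    proof (rule mult_left_mono)
      show "\<bar>a ^ Suc i - r ^ Suc i\<bar> \<le> a ^ Suc i + r ^ Suc i"
        using zero_less_power[of a "Suc i"] zero_less_power[of r "Suc i"] a r by linarith
    qed simp
    finally show ?thesis .
  qed
  show "\<exists>N. \<forall>n\<ge>N. norm (\<bar>t n powr (\<alpha> - 1) - X powr (\<alpha> - 1)\<bar> * t n) \<le> X powr \<alpha> * (a ^ Suc n + r ^ Suc n)"
    using bound Q X by (simp add: abs_mult t_def)
qed

lemma powr_moment_series: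
  fixes Q X \<alpha> :: real
  assumes Q: "Q > 1" and X: "X > 0" and \<alpha>: "\<alpha> > 0" "\<alpha> \<noteq> 1"
  defines "t \<equiv> \<lambda>i::nat. X * (1/Q) ^ Suc i"
  shows "(1 - Q powr (-\<alpha>)) / (1 - Q powr (\<alpha> - 1)) *
         (\<Sum>i. (t i powr (\<alpha> - 1) - X powr (\<alpha> - 1)) * (t i * (1 - 1/Q))) = Q powr (-\<alpha>) * X powr \<alpha>"
proof -
  define a where "a = Q powr (-\<alpha>)"
  define r where "r = 1 / Q"
  define p where "p = Q powr (\<alpha> - 1)"
  have a: "0 < a" "a < 1" unfolding a_def using Q \<alpha> by (auto simp: powr_less_one)
  have r: "0 < r" "r < 1" unfolding r_def using Q by auto
  have p: "p \<noteq> 1" unfolding p_def using Q \<alpha> by auto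
  have r_eq: "r = a * p"
    unfolding r_def a_def p_def using Q by (simp add: powr_diff powr_minus_divide field_simps)
  have moment: "(t i powr (\<alpha> - 1) - X powr (\<alpha> - 1)) * t i = X powr \<alpha> * (a ^ Suc i - r ^ Suc i)" for i
    unfolding t_def a_def r_def using Q X by (intro powr_moment_eq) auto
  have "(t i powr (\<alpha> - 1) - X powr (\<alpha> - 1)) * (t i * (1 - 1/Q)) = X powr \<alpha> * (a ^ Suc i - r ^ Suc i) * (1 - r)" for i
    by (simp only: mult.assoc[symmetric] moment) (simp add: r_def)
  then have "(\<lambda>i. (t i powr (\<alpha> - 1) - X powr (\<alpha> - 1)) * (t i * (1 - 1/Q)))
      sums (X powr \<alpha> * (a / (1 - a) - r / (1 - r)) * (1 - r))"
    using a r by (simp only:) (intro sums_mult2 sums_mult sums_diff geometric_sums_Suc; simp)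
  moreover have "(1 - a) / (1 - p) * (X powr \<alpha> * (a / (1 - a) - r / (1 - r)) * (1 - r)) = a * X powr \<alpha>"
  proof -
    have nz: "1 - a \<noteq> 0" "1 - a * p \<noteq> 0" "1 - p \<noteq> 0"
      using a p r unfolding r_eq by auto
    then have "a / (1 - a) - a * p / (1 - a * p) = a * (1 - p) / ((1 - a) * (1 - a * p))"
      by (simp add: field_simps)
    then show ?thesis
      unfolding r_eq using nz by simp
  qed
  ultimately show ?thesis
    by (simp add: sums_iff a_def p_def)
qed

lemma ln_moment_series:
  fixes Q X :: real
  assumes Q: "Q > 1" and X: "X > 0"
  defines "t \<equiv> \<lambda>i::nat. X * (1/Q) ^ Suc i"
  shows "summable (\<lambda>i. \<bar>ln (t i) - ln X\<bar> * t i)"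
    and "(1 - Q) / (Q * ln Q) * (\<Sum>i. (ln (t i) - ln X) * (t i * (1 - 1/Q))) = Q powr (-1) * X"
proof -
  define r where "r = 1 / Q"
  have r: "0 < r" "r < 1" unfolding r_def using Q by auto
  have lnQ: "ln Q > 0" using Q by simp
  have ln_t: "ln (t i) - ln X = - (real (Suc i) * ln Q)" for i
    unfolding t_def using Q X by (simp add: ln_mult ln_realpow ln_div algebra_simps)
  have d: "(\<lambda>i. (ln Q * X * r) * (real (Suc i) * r ^ i)) sums ((ln Q * X * r) * (1 / (1 - r)^2))"
    using sums_mult[OF geometric_deriv_sums[of r]] r by simp
  have "\<bar>ln (t i) - ln X\<bar> * t i = (ln Q * X * r) * (real (Suc i) * r ^ i)" for i
    unfolding ln_t using lnQ X r unfolding t_def r_def by (simp add: abs_mult)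
  then show "summable (\<lambda>i. \<bar>ln (t i) - ln X\<bar> * t i)"
    using d by (simp add: sums_iff)
  have "(ln (t i) - ln X) * (t i * (1 - 1/Q)) = - (1 - r) * ((ln Q * X * r) * (real (Suc i) * r ^ i))" for i
    unfolding ln_t unfolding t_def r_def[symmetric] by (simp add: algebra_simps)
  then have "(\<lambda>i. (ln (t i) - ln X) * (t i * (1 - 1/Q))) sums (- (1 - r) * ((ln Q * X * r) * (1 / (1 - r)^2)))"
    using sums_mult[OF d, of "- (1 - r)"] by simp
  moreover have "(1 - Q) / (Q * ln Q) * (- (1 - r) * ((ln Q * X * r) * (1 / (1 - r)^2))) = Q powr (-1) * X"
  proof -
    have "(1 - r) / (1 - r)^2 = 1 / (1 - r)"
      using r by (simp add: power2_eq_square)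
    moreover have "- (1 - r) * ((ln Q * X * r) * (1 / (1 - r)^2)) = - ln Q * X * r * ((1 - r) / (1 - r)^2)"
      by (simp add: divide_inverse algebra_simps)
    ultimately have "- (1 - r) * ((ln Q * X * r) * (1 / (1 - r)^2)) = - ln Q * X * r / (1 - r)"
      by simp
    then show ?thesis
      using Q lnQ unfolding r_def by (simp add: powr_minus_divide field_simps)
  qed
  ultimately show "(1 - Q) / (Q * ln Q) * (\<Sum>i. (ln (t i) - ln X) * (t i * (1 - 1/Q))) = Q powr (-1) * X"
    by (simp add: sums_iff)
qed

lemma powr_moment_bound:
  fixes t X \<alpha> :: real
  assumes "t > 0"
  shows "\<bar>X powr (\<alpha> - 1) - t powr (\<alpha> - 1)\<bar> * t \<le> (X powr (\<alpha> - 1) + 1) * max t (t powr \<alpha>)"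
proof -
  have tt: "t powr (\<alpha> - 1) * t = t powr \<alpha>"
    using powr_mult_base[of t "\<alpha> - 1"] assms by (simp add: mult.commute)
  have "\<bar>X powr (\<alpha> - 1) - t powr (\<alpha> - 1)\<bar> * t = \<bar>(X powr (\<alpha> - 1) - t powr (\<alpha> - 1)) * t\<bar>"
    using assms by (simp add: abs_mult)
  also have "\<dots> = \<bar>X powr (\<alpha> - 1) * t - t powr \<alpha>\<bar>"
    by (simp add: left_diff_distrib tt)
  also have "\<dots> \<le> X powr (\<alpha> - 1) * t + t powr \<alpha>"
    using abs_triangle_ineq4[of "X powr (\<alpha> - 1) * t" "t powr \<alpha>"] assms by simp
  also have "\<dots> \<le> X powr (\<alpha> - 1) * max t (t powr \<alpha>) + max t (t powr \<alpha>)"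
    by (intro add_mono mult_left_mono) auto
  finally show ?thesis by (simp add: distrib_right)
qed

definition riesz_profile :: "real \<Rightarrow> real \<Rightarrow> real" where
  "riesz_profile \<alpha> t = (if \<alpha> \<noteq> 1 then t powr (\<alpha> - 1) else ln t)"

lemma riesz_kernel_eq_profile:
  "riesz_kernel absK \<alpha> u x y
     = (riesz_profile \<alpha> (absK (x - y)) - riesz_profile \<alpha> (absK y)) * u (absK y)"
  by (simp add: riesz_kernel_def riesz_profile_def)

lemma riesz_profile_series:
  fixes q :: nat and X \<alpha> :: real
  assumes q: "1 < q" and X: "X > 0" and \<alpha>: "\<alpha> > 0"
  defines "t \<equiv> \<lambda>i::nat. X * (1 / real q) ^ Suc i"
  shows "summable (\<lambda>i. \<bar>riesz_profile \<alpha> (t i) - riesz_profile \<alpha> X\<bar> * t i)"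
    and "riesz_const q \<alpha> * (\<Sum>i. (riesz_profile \<alpha> (t i) - riesz_profile \<alpha> X) * (t i * (1 - 1 / real q)))
      = real q powr (-\<alpha>) * X powr \<alpha>"
proof -
  have Q: "real q > 1" using q by simp
  have "summable (\<lambda>i. \<bar>riesz_profile \<alpha> (t i) - riesz_profile \<alpha> X\<bar> * t i) \<and>
      riesz_const q \<alpha> * (\<Sum>i. (riesz_profile \<alpha> (t i) - riesz_profile \<alpha> X) * (t i * (1 - 1 / real q)))
      = real q powr (-\<alpha>) * X powr \<alpha>"
  proof (cases "\<alpha> = 1")
    case True
    then show ?thesis
      using ln_moment_series[OF Q X] X unfolding t_def by (simp add: riesz_profile_def riesz_const_def)
  next
    case False
    then show ?thesis
      using summable_powr_moment_series[OF Q X \<alpha>] powr_moment_series[OF Q X \<alpha> False] unfolding t_def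
      by (simp add: riesz_profile_def riesz_const_def)
  qed
  then show "summable (\<lambda>i. \<bar>riesz_profile \<alpha> (t i) - riesz_profile \<alpha> X\<bar> * t i)"
    and "riesz_const q \<alpha> * (\<Sum>i. (riesz_profile \<alpha> (t i) - riesz_profile \<alpha> X) * (t i * (1 - 1 / real q)))
      = real q powr (-\<alpha>) * X powr \<alpha>"
    by simp_all
qed

lemma summable_powr_moment_weighted:
  fixes q :: nat and X \<alpha> :: real and u :: "real \<Rightarrow> real"
  assumes q: "1 < q"
    and summable: "(\<lambda>k::int. max (real q powr real_of_int k) (real q powr (\<alpha> * real_of_int k))
        * \<bar>u (real q powi k)\<bar>) summable_on {..m}"
  shows "summable (\<lambda>i. \<bar>(X powr (\<alpha> - 1) - (real q powi (n - int i)) powr (\<alpha> - 1))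
            * u (real q powi (n - int i))\<bar> * real q powi (n - int i))"
proof (rule summable_downward_by_comparison[OF summable, where C = "X powr (\<alpha> - 1) + 1" and p = 0])
  fix k :: int
  have t: "real q powi k > 0" using q by simp
  have powr_int: "real q powr real_of_int k = real q powi k"
    using q by (simp add: powr_real_of_int')
  have "norm (\<bar>(X powr (\<alpha> - 1) - (real q powi k) powr (\<alpha> - 1)) * u (real q powi k)\<bar> * real q powi k)
      = \<bar>X powr (\<alpha> - 1) - (real q powi k) powr (\<alpha> - 1)\<bar> * real q powi k * \<bar>u (real q powi k)\<bar>"
    using t by (simp add: abs_mult)
  also have "\<dots> \<le> (X powr (\<alpha> - 1) + 1) * max (real q powi k) ((real q powi k) powr \<alpha>) * \<bar>u (real q powi k)\<bar>"
    by (rule mult_right_mono[OF powr_moment_bound[OF t]]) simp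
  also have "(real q powi k) powr \<alpha> = real q powr (\<alpha> * real_of_int k)"
    by (simp add: powr_int[symmetric] powr_powr mult.commute)
  finally show "norm (\<bar>(X powr (\<alpha> - 1) - (real q powi k) powr (\<alpha> - 1)) * u (real q powi k)\<bar> * real q powi k)
      \<le> (X powr (\<alpha> - 1) + 1) * (max (real q powr real_of_int k) (real q powr (\<alpha> * real_of_int k))
          * \<bar>u (real q powi k)\<bar>)"
    by (simp add: powr_int mult.assoc)
qed (intro mult_nonneg_nonneg, auto simp: le_max_iff_disj)

lemma summable_ln_moment_weighted:
  fixes q :: nat and u :: "real \<Rightarrow> real"
  assumes q: "1 < q"
    and summable: "(\<lambda>k::int. \<bar>real_of_int k\<bar> * real q powr real_of_int k * \<bar>u (real q powi k)\<bar>)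
        summable_on {..m}"
  shows "summable (\<lambda>i. \<bar>(ln (real q powi l) - ln (real q powi (n - int i)))
            * u (real q powi (n - int i))\<bar> * real q powi (n - int i))"
proof (rule summable_downward_by_comparison[OF summable,
      where C = "(\<bar>real_of_int l\<bar> + 1) * ln (real q)" and p = "-1"])
  fix k :: int assume "k \<le> -1"
  have ln_q: "ln (real q) > 0" using q by simp
  have powr_int: "real q powr real_of_int j = real q powi j" for j
    using q by (simp add: powr_real_of_int')
  have ln_power: "ln (real q powi j) = real_of_int j * ln (real q)" for j
    by (simp add: powr_int[symmetric])
  have "\<bar>real_of_int l\<bar> * 1 \<le> \<bar>real_of_int l\<bar> * \<bar>real_of_int k\<bar>"
    using \<open>k \<le> -1\<close> by (intro mult_left_mono) simp_all
  then have index_bound: "\<bar>real_of_int l - real_of_int k\<bar> \<le> (\<bar>real_of_int l\<bar> + 1) * \<bar>real_of_int k\<bar>"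
    using abs_triangle_ineq4[of "real_of_int l" "real_of_int k"] by (simp add: distrib_right)
  have norm_eq: "norm (\<bar>(ln (real q powi l) - ln (real q powi k)) * u (real q powi k)\<bar> * real q powi k)
      = \<bar>real_of_int l - real_of_int k\<bar> * (ln (real q) * (real q powi k * \<bar>u (real q powi k)\<bar>))"
    using ln_q q by (simp add: ln_power left_diff_distrib[symmetric] abs_mult)
  have "0 \<le> ln (real q) * (real q powi k * \<bar>u (real q powi k)\<bar>)"
    using ln_q by simp
  from mult_right_mono[OF index_bound this]
  have "norm (\<bar>(ln (real q powi l) - ln (real q powi k)) * u (real q powi k)\<bar> * real q powi k)
      \<le> (\<bar>real_of_int l\<bar> + 1) * \<bar>real_of_int k\<bar> * (ln (real q) * (real q powi k * \<bar>u (real q powi k)\<bar>))"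
    unfolding norm_eq .
  then show "norm (\<bar>(ln (real q powi l) - ln (real q powi k)) * u (real q powi k)\<bar> * real q powi k)
      \<le> (\<bar>real_of_int l\<bar> + 1) * ln (real q)
        * (\<bar>real_of_int k\<bar> * real q powr real_of_int k * \<bar>u (real q powi k)\<bar>)"
    by (simp add: powr_int mult_ac)
qed simp

lemma summable_riesz_moment:
  fixes q :: nat and \<alpha> :: real and u :: "real \<Rightarrow> real"
  assumes q: "1 < q"
    and summ: "\<alpha> \<noteq> 1 \<Longrightarrow> \<exists>m::int.
        (\<lambda>k::int. max (real q powr real_of_int k) (real q powr (\<alpha> * real_of_int k))
                     * \<bar>u (real q powi k)\<bar>) summable_on {..m}"
    and summ1: "\<alpha> = 1 \<Longrightarrow> \<exists>m::int.
        (\<lambda>k::int. \<bar>real_of_int k\<bar> * real q powr real_of_int k * \<bar>u (real q powi k)\<bar>)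
          summable_on {..m}"
  shows "summable (\<lambda>i. \<bar>(riesz_profile \<alpha> (real q powi n) - riesz_profile \<alpha> (real q powi (n - 1 - int i)))
            * u (real q powi (n - 1 - int i))\<bar> * real q powi (n - 1 - int i))"
proof (cases "\<alpha> = 1")
  case True
  then show ?thesis
    using summ1 summable_ln_moment_weighted[OF q, where l = n and n = "n - 1"]
    by (auto simp: riesz_profile_def)
next
  case False
  then show ?thesis
    using summ summable_powr_moment_weighted[OF q, where X = "real q powi n" and n = "n - 1"]
    by (auto simp: riesz_profile_def)
qed

locale local_field =
  fixes absK :: "'a::field \<Rightarrow> real" and M :: "'a measure" and q :: nat
  assumes local_field: "nonarch_local_field absK M q"
begin

lemma absK_nonneg: "absK x \<ge> 0"
  using local_field by (simp add: nonarch_local_field_def)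

lemma absK_eq_0_iff [simp]: "absK x = 0 \<longleftrightarrow> x = 0"
  using local_field by (simp add: nonarch_local_field_def)

lemma absK_mult: "absK (x * y) = absK x * absK y"
  using local_field by (simp add: nonarch_local_field_def)

lemma absK_add_le_max: "absK (x + y) \<le> max (absK x) (absK y)"
  using local_field by (simp add: nonarch_local_field_def)

lemma finite_residue_field: "finite (residue_field absK)"
  using local_field by (simp add: nonarch_local_field_def)

lemma card_residue_field: "card (residue_field absK) = q"
  using local_field by (simp add: nonarch_local_field_def)

lemma absK_range: "absK ` (UNIV - {0}) = range (\<lambda>N::int. real q powi N)"
  using local_field by (simp add: nonarch_local_field_def)

lemma space_M [simp]: "space M = UNIV"
  using local_field by (simp add: nonarch_local_field_def)

lemma sets_M: "sets M = sigma_sets UNIV (Collect (openin (absK_topology absK)))"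
  using local_field by (simp add: nonarch_local_field_def)

lemma emeasure_translation: "A \<in> sets M \<Longrightarrow> emeasure M ((\<lambda>y. a + y) ` A) = emeasure M A"
  using local_field by (simp add: nonarch_local_field_def)

lemma emeasure_ring_of_integers: "emeasure M (ring_of_integers absK) = 1"
  using local_field by (simp add: nonarch_local_field_def)

lemma absK_0 [simp]: "absK 0 = 0"
  by simp

lemma absK_1 [simp]: "absK 1 = 1"
  using absK_mult[of 1 1] by simp

lemma absK_minus [simp]: "absK (- x) = absK x"
proof -
  have "(absK (-1) - 1) * (absK (-1) + 1) = 0"
    using absK_mult[of "-1" "-1"] by (simp add: algebra_simps)
  moreover have "absK (-1) + 1 > 0"
    using absK_nonneg[of "-1"] by simp
  ultimately have "absK (-1) = 1" by simp
  then show ?thesis using absK_mult[of "-1" x] by simp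
qed

lemma absK_minus_commute: "absK (x - y) = absK (y - x)"
  by (metis absK_minus minus_diff_eq)

lemma absK_divide: "absK (x / y) = absK x / absK y"
  by (cases "y = 0") (use absK_mult[of "x / y" y] in auto)

lemma absK_add_eq_left:
  assumes "absK b < absK a"
  shows "absK (a + b) = absK a"
proof -
  have "absK (a + b) \<le> absK a"
    using absK_add_le_max[of a b] assms by simp
  moreover have "absK a \<le> max (absK (a + b)) (absK b)"
    using absK_add_le_max[of "a + b" "- b"] by simp
  ultimately show ?thesis using assms by linarith
qed

lemma q_ge_2: "q \<ge> 2"
proof -
  let ?C = "\<lambda>a. (\<lambda>p. a + p) ` max_ideal absK"
  have C_mem: "?C a \<in> residue_field absK" if "absK a \<le> 1" for a
    unfolding residue_field_def ring_of_integers_def using that by (intro imageI) simp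
  have mem: "?C 0 \<in> residue_field absK" "?C 1 \<in> residue_field absK"
    by (rule C_mem, simp)+
  have "1 \<in> ?C 1" using image_eqI[of 1 "\<lambda>p. 1 + p" 0] by (simp add: max_ideal_def)
  moreover have "1 \<notin> ?C 0" by (auto simp: max_ideal_def)
  ultimately have "card {?C 0, ?C 1} = 2"
    by (intro card_2_iff[THEN iffD2]) blast
  moreover have "card {?C 0, ?C 1} \<le> card (residue_field absK)"
    using mem by (intro card_mono[OF finite_residue_field]) blast
  ultimately show ?thesis using card_residue_field by simp
qed

lemma q_gt_1: "real q > 1"
  using q_ge_2 by simp

lemma q_power_pos: "real q powi k > 0"
  using q_gt_1 by simp

lemma q_power_less_iff: "real q powi i < real q powi j \<longleftrightarrow> i < j"
  using power_int_less_iff[OF q_gt_1] .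

lemma q_power_le_iff: "real q powi i \<le> real q powi j \<longleftrightarrow> i \<le> j"
  using power_int_le_iff[OF q_gt_1] .

lemma q_power_eq_iff: "real q powi i = real q powi j \<longleftrightarrow> i = j"
  by (simp add: order.eq_iff q_power_le_iff)

lemma absK_eq_q_power:
  assumes "x \<noteq> 0"
  obtains n :: int where "absK x = real q powi n"
proof -
  have "absK x \<in> absK ` (UNIV - {0})" using assms by simp
  then show ?thesis unfolding absK_range using that by blast
qed

lemma absK_surj_q_power: "\<exists>t. absK t = real q powi n"
proof -
  have "real q powi n \<in> absK ` (UNIV - {0})"
    unfolding absK_range by simp
  then show ?thesis by auto
qed

lemma absK_less_q_power_iff: "absK y < real q powi n \<longleftrightarrow> absK y \<le> real q powi (n - 1)"
proof (cases "y = 0")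
  case True
  then show ?thesis using q_power_pos[of n] q_power_pos[of "n - 1"] by simp
next
  case False
  then obtain j where "absK y = real q powi j" by (rule absK_eq_q_power)
  then show ?thesis by (simp add: q_power_less_iff q_power_le_iff)
qed


lemma Metric_space_absK: "Metric_space UNIV (\<lambda>x y. absK (x - y))"
proof
  fix x y z :: 'a
  show "0 \<le> absK (x - y)" by (rule absK_nonneg)
  show "absK (x - y) = absK (y - x)" by (rule absK_minus_commute)
  show "absK (x - y) = 0 \<longleftrightarrow> x = y" by simp
  have "absK (x - z) \<le> max (absK (x - y)) (absK (y - z))"
    using absK_add_le_max[of "x - y" "y - z"] by simp
  then show "absK (x - z) \<le> absK (x - y) + absK (y - z)"
    using absK_nonneg[of "x - y"] absK_nonneg[of "y - z"] by simp
qed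

lemma open_in_sets_M:
  assumes "\<And>y. y \<in> U \<Longrightarrow> \<exists>r>0. \<forall>z. absK (y - z) < r \<longrightarrow> z \<in> U"
  shows "U \<in> sets M"
proof -
  have "openin (absK_topology absK) U"
    unfolding absK_topology_def Metric_space.openin_mtopology[OF Metric_space_absK]
    using assms by (force simp: Metric_space.in_mball[OF Metric_space_absK])
  then show ?thesis unfolding sets_M by (intro sigma_sets.Basic) simp
qed

text \<open>Every point other than the centre has a neighbourhood on which the distance to the
  centre is constant, so a level set is measurable as soon as it is open at the centre.\<close>
lemma level_set_in_sets_M:
  assumes centre: "P 0 \<Longrightarrow> \<exists>r>0. \<forall>t<r. P t"
  shows "{z. P (absK (z - b))} \<in> sets M"
proof (rule open_in_sets_M)
  fix y assume y: "y \<in> {z. P (absK (z - b))}"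
  show "\<exists>r>0. \<forall>z. absK (y - z) < r \<longrightarrow> z \<in> {z. P (absK (z - b))}"
  proof (cases "y = b")
    case True
    then show ?thesis using y centre by (auto simp: absK_minus_commute)
  next
    case False
    show ?thesis
    proof (intro exI[of _ "absK (y - b)"] conjI allI impI)
      show "absK (y - b) > 0"
        using False absK_nonneg[of "y - b"] by (simp add: less_le)
      fix z assume "absK (y - z) < absK (y - b)"
      then have "absK ((y - b) + (z - y)) = absK (y - b)"
        using absK_minus_commute[of y z] by (intro absK_add_eq_left) simp
      then show "z \<in> {z. P (absK (z - b))}" using y by simp
    qed
  qed
qed

lemma cball_in_sets_M: "r > 0 \<Longrightarrow> {z. absK (z - b) \<le> r} \<in> sets M"
  by (rule level_set_in_sets_M) auto

lemma sphere_in_sets_M: "r > 0 \<Longrightarrow> {z. absK (z - b) = r} \<in> sets M"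
  by (rule level_set_in_sets_M) auto

lemma singleton_in_sets_M: "{b} \<in> sets M"
proof -
  have "{b} = UNIV - {z. absK (z - b) \<noteq> 0}" by auto
  also have "\<dots> \<in> sets M"
    using sets.compl_sets[of "{z. absK (z - b) \<noteq> 0}" M] level_set_in_sets_M[of "\<lambda>t. t \<noteq> 0" b]
    by simp
  finally show ?thesis .
qed

lemma image_mult_level_set:
  assumes "t \<noteq> 0"
  shows "(\<lambda>y. t * y) ` {y. P (absK y)} = {z. P (absK z / absK t)}"
proof (intro equalityI subsetI)
  fix z assume "z \<in> {z. P (absK z / absK t)}"
  then have "z / t \<in> {y. P (absK y)}" by (simp add: absK_divide)
  then show "z \<in> (\<lambda>y. t * y) ` {y. P (absK y)}"
    using assms by (intro image_eqI[of _ _ "z / t"]) auto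
next
  fix z assume "z \<in> (\<lambda>y. t * y) ` {y. P (absK y)}"
  then obtain y where "P (absK y)" "z = t * y" by blast
  then show "z \<in> {z. P (absK z / absK t)}" using assms by (simp add: absK_mult)
qed

lemma image_add_level_set: "(\<lambda>z. b + z) ` {z. P (absK z)} = {y. P (absK (y - b))}"
proof (intro equalityI subsetI)
  fix y assume "y \<in> {y. P (absK (y - b))}"
  then show "y \<in> (\<lambda>z. b + z) ` {z. P (absK z)}" by (intro image_eqI[of _ _ "y - b"]) auto
qed auto

lemma residue_field_disjoint:
  assumes "C1 \<in> residue_field absK" "C2 \<in> residue_field absK" "C1 \<noteq> C2"
  shows "C1 \<inter> C2 = {}"
proof (rule ccontr)
  assume "C1 \<inter> C2 \<noteq> {}"
  obtain a b where a: "C1 = (\<lambda>p. a + p) ` max_ideal absK" and b: "C2 = (\<lambda>p. b + p) ` max_ideal absK"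
    using assms(1,2) unfolding residue_field_def by blast
  from \<open>C1 \<inter> C2 \<noteq> {}\<close> obtain p1 p2 where p: "absK p1 < 1" "absK p2 < 1" "a + p1 = b + p2"
    unfolding a b max_ideal_def by auto
  have shift: "(\<lambda>p. c + p) ` max_ideal absK \<subseteq> (\<lambda>p. d + p) ` max_ideal absK"
    if e: "absK e < 1" and c: "c = d + e" for c d e
  proof
    fix w assume "w \<in> (\<lambda>p. c + p) ` max_ideal absK"
    then obtain p where "absK p < 1" "w = d + (e + p)"
      using c unfolding max_ideal_def by (auto simp: algebra_simps)
    moreover have "absK (e + p) < 1"
      using absK_add_le_max[of e p] e \<open>absK p < 1\<close> by simp
    ultimately show "w \<in> (\<lambda>p. d + p) ` max_ideal absK" unfolding max_ideal_def by auto
  qed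
  have small: "absK (p2 - p1) < 1" "absK (p1 - p2) < 1"
    using absK_add_le_max[of p2 "- p1"] absK_add_le_max[of p1 "- p2"] p by auto
  have "C1 \<subseteq> C2" unfolding a b
    by (rule shift[OF small(1)]) (use p(3) in \<open>simp add: algebra_simps\<close>)
  moreover have "C2 \<subseteq> C1" unfolding a b
    by (rule shift[OF small(2)]) (use p(3) in \<open>simp add: algebra_simps\<close>)
  ultimately have "C1 = C2" ..
  with assms(3) show False ..
qed

lemma Union_residue_field: "\<Union> (residue_field absK) = ring_of_integers absK"
proof (intro equalityI subsetI)
  fix x assume "x \<in> \<Union> (residue_field absK)"
  then obtain a p where "absK a \<le> 1" "absK p < 1" "x = a + p"
    unfolding residue_field_def ring_of_integers_def max_ideal_def by auto
  then show "x \<in> ring_of_integers absK"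
    using absK_add_le_max[of a p] unfolding ring_of_integers_def by auto
next
  fix x assume x: "x \<in> ring_of_integers absK"
  have "x \<in> (\<lambda>p. x + p) ` max_ideal absK"
    unfolding max_ideal_def by (intro image_eqI[of _ _ 0]) auto
  moreover have "(\<lambda>p. x + p) ` max_ideal absK \<in> residue_field absK"
    using x unfolding residue_field_def by blast
  ultimately show "x \<in> \<Union> (residue_field absK)" by blast
qed

definition valuation_ball :: "int \<Rightarrow> 'a set" where
  "valuation_ball k = {y. absK y \<le> real q powi k}"

lemma valuation_ball_in_sets: "valuation_ball k \<in> sets M"
  unfolding valuation_ball_def using cball_in_sets_M[of "real q powi k" 0] q_power_pos by simp

lemma valuation_ball_mono: "k \<le> l \<Longrightarrow> valuation_ball k \<subseteq> valuation_ball l"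
  unfolding valuation_ball_def using q_power_le_iff[of k l] by auto

text \<open>Multiplying by an element of absolute value \<open>q^k\<close> maps the residue classes onto
  the \<open>q\<close> disjoint translates of \<open>valuation_ball (k - 1)\<close> that make up \<open>valuation_ball k\<close>.\<close>
lemma emeasure_valuation_ball_step:
  "emeasure M (valuation_ball k) = of_nat q * emeasure M (valuation_ball (k - 1))"
proof -
  obtain t where t: "absK t = real q powi k" using absK_surj_q_power by blast
  then have t0: "t \<noteq> 0" using q_power_pos[of k] by auto
  let ?F = "\<lambda>C. (\<lambda>y. t * y) ` C"
  have class_image: "\<exists>a. ?F C = (\<lambda>z. a + z) ` valuation_ball (k - 1)"
    if C: "C \<in> residue_field absK" for C
  proof -
    obtain a where a: "C = (\<lambda>p. a + p) ` max_ideal absK"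
      using C unfolding residue_field_def by blast
    have "?F C = (\<lambda>z. t * a + z) ` ((\<lambda>y. t * y) ` max_ideal absK)"
      unfolding a by (simp add: image_image distrib_left)
    also have "(\<lambda>y. t * y) ` max_ideal absK = valuation_ball (k - 1)"
      unfolding max_ideal_def valuation_ball_def image_mult_level_set[OF t0, of "\<lambda>r. r < 1"] t
      using q_power_pos[of k] absK_less_q_power_iff by (simp add: divide_less_eq)
    finally show ?thesis by blast
  qed
  have meas: "?F C \<in> sets M" and em: "emeasure M (?F C) = emeasure M (valuation_ball (k - 1))"
    if C: "C \<in> residue_field absK" for C
  proof -
    obtain a where a: "?F C = (\<lambda>z. a + z) ` valuation_ball (k - 1)"
      using class_image[OF C] by blast
    show "?F C \<in> sets M"
      unfolding a valuation_ball_def image_add_level_set[of a "\<lambda>r. r \<le> real q powi (k - 1)"]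
      by (rule cball_in_sets_M[OF q_power_pos])
    show "emeasure M (?F C) = emeasure M (valuation_ball (k - 1))"
      unfolding a by (rule emeasure_translation[OF valuation_ball_in_sets])
  qed
  have disj: "disjoint_family_on ?F (residue_field absK)"
    unfolding disjoint_family_on_def
  proof (intro ballI impI)
    fix C1 C2 assume "C1 \<in> residue_field absK" "C2 \<in> residue_field absK" "C1 \<noteq> C2"
    then have "C1 \<inter> C2 = {}" by (rule residue_field_disjoint)
    then show "?F C1 \<inter> ?F C2 = {}" using t0 by auto
  qed
  have "(\<Union>C\<in>residue_field absK. ?F C) = (\<lambda>y. t * y) ` \<Union> (residue_field absK)"
    by blast
  also have "\<dots> = valuation_ball k"
    unfolding Union_residue_field ring_of_integers_def valuation_ball_def
      image_mult_level_set[OF t0, of "\<lambda>r. r \<le> 1"] t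
    using q_power_pos[of k] by (simp add: divide_le_eq)
  finally have "emeasure M (valuation_ball k) = (\<Sum>C\<in>residue_field absK. emeasure M (?F C))"
    using sum_emeasure[of ?F "residue_field absK" M] disj finite_residue_field meas
    by (simp add: image_subset_iff)
  also have "\<dots> = of_nat q * emeasure M (valuation_ball (k - 1))"
    using em card_residue_field by simp
  finally show ?thesis .
qed

lemma emeasure_valuation_ball_0: "emeasure M (valuation_ball 0) = 1"
  using emeasure_ring_of_integers unfolding valuation_ball_def ring_of_integers_def by simp

lemma emeasure_valuation_ball_finite: "emeasure M (valuation_ball k) < \<infinity>"
proof (induction k rule: int_induct[where k = 0])
  case base
  then show ?case using emeasure_valuation_ball_0 by simp
next
  case (step1 i)
  then show ?case
    using emeasure_valuation_ball_step[of "i + 1"]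
    by (simp add: ennreal_of_nat_eq_real_of_nat ennreal_mult_less_top)
next
  case (step2 i)
  then show ?case
    using emeasure_mono[OF valuation_ball_mono[of "i - 1" i] valuation_ball_in_sets]
    by (simp add: le_less_trans)
qed

lemma measure_valuation_ball: "measure M (valuation_ball k) = real q powi k"
proof -
  have step: "measure M (valuation_ball i) = real q * measure M (valuation_ball (i - 1))" for i
    using emeasure_valuation_ball_step[of i] unfolding measure_def
    by (simp add: ennreal_of_nat_eq_real_of_nat enn2real_mult)
  show ?thesis
  proof (induction k rule: int_induct[where k = 0])
    case base
    then show ?case using emeasure_valuation_ball_0 by (simp add: measure_def)
  next
    case (step1 i)
    then show ?case using step[of "i + 1"] q_gt_1 by (simp add: power_int_add)
  next
    case (step2 i)
    then show ?case using step[of i] q_gt_1 by (simp add: power_int_diff field_simps)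
  qed
qed


lemma cball_q_power_eq: "{y. absK (y - b) \<le> real q powi k} = (\<lambda>z. b + z) ` valuation_ball k"
  unfolding valuation_ball_def by (rule image_add_level_set[symmetric])

lemma emeasure_cball_q_power:
  "emeasure M {y. absK (y - b) \<le> real q powi k} = emeasure M (valuation_ball k)"
  unfolding cball_q_power_eq by (rule emeasure_translation[OF valuation_ball_in_sets])

lemma fmeasurable_cball_q_power: "{y. absK (y - b) \<le> real q powi k} \<in> fmeasurable M"
  using cball_in_sets_M[OF q_power_pos] emeasure_cball_q_power emeasure_valuation_ball_finite
  unfolding fmeasurable_def by simp

lemma measure_cball_q_power: "measure M {y. absK (y - b) \<le> real q powi k} = real q powi k"
  using emeasure_cball_q_power measure_valuation_ball unfolding measure_def by simp

lemma fmeasurable_subset_cball_q_power: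
  assumes "A \<in> sets M" "A \<subseteq> {y. absK (y - b) \<le> real q powi k}"
  shows "A \<in> fmeasurable M"
  using assms fmeasurable_cball_q_power emeasure_mono[OF assms(2) cball_in_sets_M[OF q_power_pos]]
  unfolding fmeasurable_def by (auto intro: le_less_trans)

lemma fmeasurable_singleton: "{b} \<in> fmeasurable M"
  by (rule fmeasurable_subset_cball_q_power[OF singleton_in_sets_M, where b = b and k = 0]) simp

text \<open>Haar measure has no atoms: a point lies in balls of arbitrarily small measure.\<close>
lemma measure_singleton: "measure M {b} = 0"
proof (rule ccontr)
  assume "measure M {b} \<noteq> 0"
  then have pos: "measure M {b} > 0" using measure_nonneg[of M "{b}"] by linarith
  obtain n where n: "(1 / real q) ^ n < measure M {b}"
    using real_arch_pow_inv[OF pos, of "1 / real q"] q_gt_1 by auto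
  have "measure M {b} \<le> measure M {y. absK (y - b) \<le> real q powi (- int n)}"
    by (rule measure_mono_fmeasurable[OF _ singleton_in_sets_M fmeasurable_cball_q_power])
      (use q_power_pos[of "- int n"] in simp)
  also have "\<dots> = (1 / real q) ^ n"
    unfolding measure_cball_q_power by (simp add: power_int_minus power_one_over inverse_eq_divide)
  finally show False using n by simp
qed

lemma fmeasurable_sphere_q_power: "{y. absK (y - b) = real q powi k} \<in> fmeasurable M"
  by (rule fmeasurable_subset_cball_q_power[OF sphere_in_sets_M[OF q_power_pos], where b = b and k = k]) auto

lemma measure_sphere_q_power:
  "measure M {y. absK (y - b) = real q powi k} = real q powi k * (1 - 1 / real q)"
proof -
  have "absK y = real q powi k \<longleftrightarrow> absK y \<le> real q powi k \<and> \<not> absK y \<le> real q powi (k - 1)" for y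
    using absK_less_q_power_iff[of y k] by linarith
  then have "{y. absK y = real q powi k} = valuation_ball k - valuation_ball (k - 1)"
    unfolding valuation_ball_def by blast
  then have "measure M {y. absK y = real q powi k}
      = measure M (valuation_ball k) - measure M (valuation_ball (k - 1))"
    using valuation_ball_mono[of "k - 1" k] emeasure_valuation_ball_finite[of k] valuation_ball_in_sets
    by (simp add: measure_Diff fmeasurable_def)
  also have "\<dots> = real q powi k - real q powi (k - 1)"
    by (simp add: measure_valuation_ball)
  also have "\<dots> = real q powi k * (1 - 1 / real q)"
    using q_gt_1 by (simp add: power_int_diff algebra_simps)
  finally have sphere_0: "measure M {y. absK y = real q powi k} = real q powi k * (1 - 1 / real q)" .
  have "emeasure M {y. absK (y - b) = real q powi k}
      = emeasure M ((\<lambda>z. b + z) ` {z. absK z = real q powi k})"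
    by (simp only: image_add_level_set[of b "\<lambda>r. r = real q powi k"])
  also have "\<dots> = emeasure M {y. absK y = real q powi k}"
    using sphere_in_sets_M[OF q_power_pos, of 0 k] by (intro emeasure_translation) simp
  finally have "emeasure M {y. absK (y - b) = real q powi k} = emeasure M {y. absK y = real q powi k}" .
  then show ?thesis using sphere_0 unfolding measure_def by simp
qed

definition ball_shell :: "'a \<Rightarrow> int \<Rightarrow> nat \<Rightarrow> 'a set" where
  "ball_shell b n i =
     (case i of 0 \<Rightarrow> {b} | Suc j \<Rightarrow> {y. absK (y - b) = real q powi (n - 1 - int j)})"

lemma disjoint_family_ball_shell: "disjoint_family (ball_shell b n)"
  unfolding disjoint_family_on_def
proof (intro ballI impI)
  fix i j :: nat assume ij: "i \<noteq> j"
  show "ball_shell b n i \<inter> ball_shell b n j = {}"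
  proof (cases i; cases j)
    fix i' j' assume "i = Suc i'" "j = Suc j'"
    then show ?thesis using ij by (auto simp: ball_shell_def q_power_eq_iff)
  qed (use ij q_power_pos q_ge_2 in \<open>auto simp: ball_shell_def\<close>)
qed

lemma fmeasurable_ball_shell: "ball_shell b n i \<in> fmeasurable M"
  by (cases i) (auto simp: ball_shell_def fmeasurable_singleton fmeasurable_sphere_q_power)

lemma measure_ball_shell:
  "measure M (ball_shell b n i) =
     (case i of 0 \<Rightarrow> 0 | Suc j \<Rightarrow> real q powi (n - 1 - int j) * (1 - 1 / real q))"
  by (cases i) (auto simp: ball_shell_def measure_singleton measure_sphere_q_power)

lemma mem_Union_ball_shell: "y \<in> (\<Union>i. ball_shell b n i) \<longleftrightarrow> absK (y - b) < real q powi n"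
proof
  assume "y \<in> (\<Union>i. ball_shell b n i)"
  then obtain i where "y \<in> ball_shell b n i" by blast
  then show "absK (y - b) < real q powi n"
    by (cases i) (simp_all add: ball_shell_def q_power_pos q_power_less_iff)
next
  assume y: "absK (y - b) < real q powi n"
  show "y \<in> (\<Union>i. ball_shell b n i)"
  proof (cases "y = b")
    case True
    then show ?thesis by (auto simp: ball_shell_def intro: exI[of _ 0])
  next
    case False
    then have "y - b \<noteq> 0" by simp
    then obtain j where j: "absK (y - b) = real q powi j" by (rule absK_eq_q_power)
    then have "j < n" using y q_power_less_iff by simp
    then have "y \<in> ball_shell b n (Suc (nat (n - 1 - j)))" using j by (simp add: ball_shell_def)
    then show ?thesis by blast
  qed
qed

lemma radial_integral_ball:
  fixes g :: "real \<Rightarrow> real"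
  assumes summable: "summable (\<lambda>i. \<bar>g (real q powi (n - 1 - int i))\<bar> * real q powi (n - 1 - int i))"
  shows "set_integrable M {y. absK (y - b) < real q powi n} (\<lambda>y. g (absK (y - b)))"
    and "(LINT y:{y. absK (y - b) < real q powi n}|M. g (absK (y - b)))
       = (\<Sum>i. g (real q powi (n - 1 - int i)) * (real q powi (n - 1 - int i) * (1 - 1 / real q)))"
proof -
  define c where "c i = (case i of 0 \<Rightarrow> g 0 | Suc j \<Rightarrow> g (real q powi (n - 1 - int j)))" for i
  define f where "f y = indicator {y. absK (y - b) < real q powi n} y *\<^sub>R g (absK (y - b))" for y
  have summable_c: "summable (\<lambda>i. \<bar>c i\<bar> * measure M (ball_shell b n i))"
    using summable_mult2[OF summable, of "1 - 1 / real q"]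
    by (subst summable_Suc_iff[symmetric]) (simp add: c_def measure_ball_shell mult.assoc)
  have "f y = c i" if y: "y \<in> ball_shell b n i" for i y
  proof -
    have "absK (y - b) < real q powi n"
      using y mem_Union_ball_shell[of y b n] by blast
    then show ?thesis using y by (cases i) (simp_all add: c_def f_def ball_shell_def)
  qed
  moreover have "f y = 0" if "\<And>i. y \<notin> ball_shell b n i" for y
    using that mem_Union_ball_shell[of y b n] by (simp add: f_def)
  ultimately have integral: "integrable M f \<and> integral\<^sup>L M f = (\<Sum>i. c i * measure M (ball_shell b n i))"
    using integral_countable_step_function[OF disjoint_family_ball_shell fmeasurable_ball_shell
        summable_c] by blast
  have "summable (\<lambda>i. c i * measure M (ball_shell b n i))"
    by (rule summable_norm_cancel) (use summable_c in \<open>simp add: abs_mult\<close>)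
  then have "(\<Sum>i. c i * measure M (ball_shell b n i))
      = (\<Sum>i. c (Suc i) * measure M (ball_shell b n (Suc i)))"
    using suminf_split_head[of "\<lambda>i. c i * measure M (ball_shell b n i)"]
    by (simp add: measure_ball_shell)
  also have "\<dots> = (\<Sum>i. g (real q powi (n - 1 - int i)) * (real q powi (n - 1 - int i) * (1 - 1 / real q)))"
    by (simp add: c_def measure_ball_shell)
  finally have "(\<Sum>i. c i * measure M (ball_shell b n i))
      = (\<Sum>i. g (real q powi (n - 1 - int i)) * (real q powi (n - 1 - int i) * (1 - 1 / real q)))" .
  with integral show "set_integrable M {y. absK (y - b) < real q powi n} (\<lambda>y. g (absK (y - b)))"
    and "(LINT y:{y. absK (y - b) < real q powi n}|M. g (absK (y - b)))
       = (\<Sum>i. g (real q powi (n - 1 - int i)) * (real q powi (n - 1 - int i) * (1 - 1 / real q)))"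
    unfolding set_integrable_def set_lebesgue_integral_def f_def by simp_all
qed


lemma kernel_split:
  fixes \<phi> u :: "real \<Rightarrow> real"
  assumes "x \<noteq> 0"
  shows "indicator {y. absK y \<le> absK x} y * ((\<phi> (absK (x - y)) - \<phi> (absK y)) * u (absK y))
    = indicator {y. absK y < absK x} y * ((\<phi> (absK x) - \<phi> (absK y)) * u (absK y))
      + u (absK x) * (indicator {y. absK (y - x) < absK x} y * (\<phi> (absK (y - x)) - \<phi> (absK x)))"
proof -
  consider "absK y < absK x" | "absK y = absK x" | "absK y > absK x" by linarith
  then show ?thesis
  proof cases
    case 1
    then have "absK (x + - y) = absK x" by (intro absK_add_eq_left) simp
    then show ?thesis using 1 absK_minus_commute[of x y] by simp
  next
    case 2
    show ?thesis
    proof (cases "absK (y - x) < absK x")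
      case True
      then show ?thesis using 2 absK_minus_commute[of x y] by (simp add: algebra_simps)
    next
      case False
      moreover have "absK (x - y) \<le> absK x"
        using absK_add_le_max[of x "- y"] 2 by simp
      ultimately show ?thesis using 2 absK_minus_commute[of x y] by simp
    qed
  next
    case 3
    then have "absK (y + - x) = absK y" by (intro absK_add_eq_left) simp
    then show ?thesis using 3 by simp
  qed
qed

lemma set_integral_kernel_split:
  fixes \<phi> u :: "real \<Rightarrow> real"
  assumes x: "x \<noteq> 0" and n: "absK x = real q powi n"
    and summable_inner: "summable (\<lambda>i. \<bar>(\<phi> (absK x) - \<phi> (real q powi (n - 1 - int i)))
          * u (real q powi (n - 1 - int i))\<bar> * real q powi (n - 1 - int i))"
    and summable_sphere: "summable (\<lambda>i. \<bar>\<phi> (real q powi (n - 1 - int i)) - \<phi> (absK x)\<bar>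
          * real q powi (n - 1 - int i))"
  shows "set_integrable M {y. absK y \<le> absK x} (\<lambda>y. (\<phi> (absK (x - y)) - \<phi> (absK y)) * u (absK y))"
    and "set_integrable M {y. absK y < absK x} (\<lambda>y. (\<phi> (absK x) - \<phi> (absK y)) * u (absK y))"
    and "(LINT y:{y. absK y \<le> absK x}|M. (\<phi> (absK (x - y)) - \<phi> (absK y)) * u (absK y))
      = (LINT y:{y. absK y < absK x}|M. (\<phi> (absK x) - \<phi> (absK y)) * u (absK y))
        + u (absK x) * (\<Sum>i. (\<phi> (real q powi (n - 1 - int i)) - \<phi> (absK x))
            * (real q powi (n - 1 - int i) * (1 - 1 / real q)))"
proof -
  define f1 where "f1 y = indicator {y. absK y < absK x} y * ((\<phi> (absK x) - \<phi> (absK y)) * u (absK y))" for y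
  define f2 where "f2 y = indicator {y. absK (y - x) < absK x} y * (\<phi> (absK (y - x)) - \<phi> (absK x))" for y
  have inner: "set_integrable M {y. absK y < absK x} (\<lambda>y. (\<phi> (absK x) - \<phi> (absK y)) * u (absK y))"
    using radial_integral_ball(1)[of "\<lambda>t. (\<phi> (absK x) - \<phi> t) * u t" n 0] summable_inner n by simp
  then have i1: "integrable M f1"
    unfolding set_integrable_def f1_def by simp
  have i2: "integrable M f2"
    using radial_integral_ball(1)[of "\<lambda>t. \<phi> t - \<phi> (absK x)" n x] summable_sphere n
    unfolding set_integrable_def f2_def by simp
  have f2: "integral\<^sup>L M f2 = (\<Sum>i. (\<phi> (real q powi (n - 1 - int i)) - \<phi> (absK x))
      * (real q powi (n - 1 - int i) * (1 - 1 / real q)))"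
    using radial_integral_ball(2)[of "\<lambda>t. \<phi> t - \<phi> (absK x)" n x] summable_sphere n
    unfolding set_lebesgue_integral_def f2_def by simp
  have split: "(\<lambda>y. indicator {y. absK y \<le> absK x} y *\<^sub>R ((\<phi> (absK (x - y)) - \<phi> (absK y)) * u (absK y)))
      = (\<lambda>y. f1 y + u (absK x) * f2 y)"
    using kernel_split[OF x] unfolding f1_def f2_def by simp
  show "set_integrable M {y. absK y \<le> absK x} (\<lambda>y. (\<phi> (absK (x - y)) - \<phi> (absK y)) * u (absK y))"
    unfolding set_integrable_def split using i1 i2 by simp
  show "set_integrable M {y. absK y < absK x} (\<lambda>y. (\<phi> (absK x) - \<phi> (absK y)) * u (absK y))"
    by (rule inner)
  show "(LINT y:{y. absK y \<le> absK x}|M. (\<phi> (absK (x - y)) - \<phi> (absK y)) * u (absK y))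
      = (LINT y:{y. absK y < absK x}|M. (\<phi> (absK x) - \<phi> (absK y)) * u (absK y))
        + u (absK x) * (\<Sum>i. (\<phi> (real q powi (n - 1 - int i)) - \<phi> (absK x))
            * (real q powi (n - 1 - int i) * (1 - 1 / real q)))"
  proof -
    have "(LINT y:{y. absK y \<le> absK x}|M. (\<phi> (absK (x - y)) - \<phi> (absK y)) * u (absK y))
        = integral\<^sup>L M (\<lambda>y. f1 y + u (absK x) * f2 y)"
      unfolding set_lebesgue_integral_def split ..
    also have "\<dots> = integral\<^sup>L M f1 + u (absK x) * integral\<^sup>L M f2"
      using i1 i2 by simp
    also have "integral\<^sup>L M f1 = (LINT y:{y. absK y < absK x}|M. (\<phi> (absK x) - \<phi> (absK y)) * u (absK y))"
      unfolding set_lebesgue_integral_def f1_def by simp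
    finally show ?thesis unfolding f2 .
  qed
qed


lemma riesz_pot_nonzero:
  fixes \<alpha> :: real and u :: "real \<Rightarrow> real"
  assumes \<alpha>: "\<alpha> > 0" and x: "x \<noteq> 0"
    and moments: "\<And>n. summable (\<lambda>i. \<bar>(riesz_profile \<alpha> (real q powi n)
        - riesz_profile \<alpha> (real q powi (n - 1 - int i))) * u (real q powi (n - 1 - int i))\<bar>
        * real q powi (n - 1 - int i))"
  shows "set_integrable M {y. absK y \<le> absK x} (riesz_kernel absK \<alpha> u x)"
    and "set_integrable M {y. absK y < absK x}
           (\<lambda>y. (riesz_profile \<alpha> (absK x) - riesz_profile \<alpha> (absK y)) * u (absK y))"
    and "riesz_pot absK M q \<alpha> u x = real q powr (-\<alpha>) * absK x powr \<alpha> * u (absK x)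
           + riesz_const q \<alpha> * (LINT y:{y. absK y < absK x}|M.
               (riesz_profile \<alpha> (absK x) - riesz_profile \<alpha> (absK y)) * u (absK y))"
proof -
  obtain n where n: "absK x = real q powi n" using x by (rule absK_eq_q_power)
  have X: "absK x > 0" using x absK_nonneg[of x] by (simp add: less_le)
  have shells: "real q powi (n - 1 - int i) = absK x * (1 / real q) ^ Suc i" for i
    unfolding n using q_gt_1 by (intro power_int_diff_Suc) simp
  have q: "1 < q" using q_ge_2 by simp
  have inner: "summable (\<lambda>i. \<bar>(riesz_profile \<alpha> (absK x) - riesz_profile \<alpha> (real q powi (n - 1 - int i)))
      * u (real q powi (n - 1 - int i))\<bar> * real q powi (n - 1 - int i))"
    unfolding n by (rule moments)
  have sphere: "summable (\<lambda>i. \<bar>riesz_profile \<alpha> (real q powi (n - 1 - int i)) - riesz_profile \<alpha> (absK x)\<bar>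
      * real q powi (n - 1 - int i))"
    unfolding shells by (rule riesz_profile_series(1)[OF q X \<alpha>])
  have sphere_sum: "riesz_const q \<alpha> * (\<Sum>i. (riesz_profile \<alpha> (real q powi (n - 1 - int i)) - riesz_profile \<alpha> (absK x))
      * (real q powi (n - 1 - int i) * (1 - 1 / real q))) = real q powr (-\<alpha>) * absK x powr \<alpha>"
    unfolding shells by (rule riesz_profile_series(2)[OF q X \<alpha>])
  note split = set_integral_kernel_split[OF x n inner sphere]
  have kernel: "riesz_kernel absK \<alpha> u x
      = (\<lambda>y. (riesz_profile \<alpha> (absK (x - y)) - riesz_profile \<alpha> (absK y)) * u (absK y))"
    by (simp add: fun_eq_iff riesz_kernel_eq_profile)
  show "set_integrable M {y. absK y \<le> absK x} (riesz_kernel absK \<alpha> u x)"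
    unfolding kernel by (rule split(1))
  show "set_integrable M {y. absK y < absK x}
      (\<lambda>y. (riesz_profile \<alpha> (absK x) - riesz_profile \<alpha> (absK y)) * u (absK y))"
    by (rule split(2))
  have "riesz_pot absK M q \<alpha> u x = riesz_const q \<alpha> *
      ((LINT y:{y. absK y < absK x}|M. (riesz_profile \<alpha> (absK x) - riesz_profile \<alpha> (absK y)) * u (absK y))
       + u (absK x) * (\<Sum>i. (riesz_profile \<alpha> (real q powi (n - 1 - int i)) - riesz_profile \<alpha> (absK x))
           * (real q powi (n - 1 - int i) * (1 - 1 / real q))))"
    unfolding riesz_pot_def kernel split(3) ..
  also have "\<dots> = u (absK x) * (real q powr (-\<alpha>) * absK x powr \<alpha>)
      + riesz_const q \<alpha> * (LINT y:{y. absK y < absK x}|M.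
          (riesz_profile \<alpha> (absK x) - riesz_profile \<alpha> (absK y)) * u (absK y))"
    unfolding sphere_sum[symmetric] by (simp add: algebra_simps)
  finally show "riesz_pot absK M q \<alpha> u x = real q powr (-\<alpha>) * absK x powr \<alpha> * u (absK x)
      + riesz_const q \<alpha> * (LINT y:{y. absK y < absK x}|M.
          (riesz_profile \<alpha> (absK x) - riesz_profile \<alpha> (absK y)) * u (absK y))"
    by (simp add: mult_ac)
qed

lemma set_integrable_riesz_kernel_0:
  "set_integrable M {y. absK y \<le> absK 0} (riesz_kernel absK \<alpha> u 0)"
proof -
  have "indicator {y. absK y \<le> absK 0} y *\<^sub>R riesz_kernel absK \<alpha> u 0 y
      = indicator {0} y * riesz_kernel absK \<alpha> u 0 0" for y
    using absK_nonneg[of y] by (cases "y = 0") (auto simp: indicator_def)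
  moreover have "integrable M (\<lambda>y. indicator {0} y * riesz_kernel absK \<alpha> u 0 0)"
    using fmeasurable_singleton[of 0]
    by (intro integrable_mult_left integrable_real_indicator) (auto simp: fmeasurable_def)
  ultimately show ?thesis unfolding set_integrable_def by simp
qed

end

theorem lemma2:
  fixes absK :: "'a::field \<Rightarrow> real" and M :: "'a measure" and q :: nat
    and \<alpha> :: real and u :: "real \<Rightarrow> real"
  assumes K: "nonarch_local_field absK M q"
    and alpha_pos: "\<alpha> > 0"
    and summ: "\<alpha> \<noteq> 1 \<Longrightarrow> \<exists>m::int.
        (\<lambda>k::int. max (real q powr real_of_int k) (real q powr (\<alpha> * real_of_int k))
                     * \<bar>u (real q powi k)\<bar>) summable_on {..m}"
    and summ1: "\<alpha> = 1 \<Longrightarrow> \<exists>m::int.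
        (\<lambda>k::int. \<bar>real_of_int k\<bar> * real q powr real_of_int k * \<bar>u (real q powi k)\<bar>)
          summable_on {..m}"
  shows "(\<forall>x. set_integrable M {y. absK y \<le> absK x} (riesz_kernel absK \<alpha> u x))
       \<and> (\<forall>x y. absK x = absK y \<longrightarrow> riesz_pot absK M q \<alpha> u x = riesz_pot absK M q \<alpha> u y)
       \<and> (\<alpha> \<noteq> 1 \<longrightarrow> (\<forall>x. x \<noteq> 0 \<longrightarrow>
            set_integrable M {y. absK y < absK x}
              (\<lambda>y. (absK x powr (\<alpha> - 1) - absK y powr (\<alpha> - 1)) * u (absK y))
          \<and> riesz_pot absK M q \<alpha> u x =
              real q powr (-\<alpha>) * absK x powr \<alpha> * u (absK x)
              + (1 - real q powr (-\<alpha>)) / (1 - real q powr (\<alpha> - 1)) *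
                (LINT y : {y. absK y < absK x} | M.
                   (absK x powr (\<alpha> - 1) - absK y powr (\<alpha> - 1)) * u (absK y))))
       \<and> (\<alpha> = 1 \<longrightarrow> (\<forall>x. x \<noteq> 0 \<longrightarrow>
            set_integrable M {y. absK y < absK x}
              (\<lambda>y. (ln (absK x) - ln (absK y)) * u (absK y))
          \<and> riesz_pot absK M q \<alpha> u x =
              real q powr (-1) * absK x * u (absK x)
              + (1 - real q) / (real q * ln (real q)) *
                (LINT y : {y. absK y < absK x} | M.
                   (ln (absK x) - ln (absK y)) * u (absK y))))"
proof -
  interpret local_field absK M q by (rule local_field.intro) (rule K)
  have moments: "summable (\<lambda>i. \<bar>(riesz_profile \<alpha> (real q powi n)
      - riesz_profile \<alpha> (real q powi (n - 1 - int i))) * u (real q powi (n - 1 - int i))\<bar>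
      * real q powi (n - 1 - int i))" for n
    using q_ge_2 by (intro summable_riesz_moment summ summ1) simp_all
  note nonzero = riesz_pot_nonzero[OF alpha_pos _ moments]
  have integrable: "set_integrable M {y. absK y \<le> absK x} (riesz_kernel absK \<alpha> u x)" for x
    using nonzero(1)[of x] set_integrable_riesz_kernel_0 by (cases "x = 0") auto
  have radial: "riesz_pot absK M q \<alpha> u x = riesz_pot absK M q \<alpha> u y" if "absK x = absK y" for x y
  proof -
    have "x = 0 \<longleftrightarrow> y = 0"
      using that absK_eq_0_iff by metis
    then show ?thesis
      using nonzero(3)[of x] nonzero(3)[of y] that by (cases "x = 0") simp_all
  qed
  show ?thesis
  proof (intro conjI allI impI)
    fix x y :: 'a
    show "set_integrable M {y. absK y \<le> absK x} (riesz_kernel absK \<alpha> u x)"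
      by (rule integrable)
    assume "absK x = absK y"
    then show "riesz_pot absK M q \<alpha> u x = riesz_pot absK M q \<alpha> u y"
      by (rule radial)
  qed (use nonzero(2,3) absK_nonneg in \<open>simp_all add: riesz_profile_def riesz_const_def\<close>)
qed

end
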